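(* Let $m,p$ be positive integers and let $\gamma=(\gamma_{ik})\in\{0,1\}^{m\times p}$ satisfy $\sum_{k=1}^p\gamma_{ik}=1$ for every $i=1,\dots,m$. For each $i$ let $\pi(i)$ be the unique $k$ with $\gamma_{ik}=1$. Then $\gamma$ satisfies \[\sum_{j=1}^{i-1}\gamma_{jk}\;\ge\;\sum_{l=k+1}^{p}\gamma_{il}\qquad\text{for all } i\in\{1,\dots,m\},\ k\in\{1,\dots,p\}\text{ with } k\le i\] (an empty sum being $0$) if and only if $\pi(1)=1$ and $\pi(i)\le 1+\max_{j<i}\pi(j)$ for every $i=2,\dots,m$. Consequently, for every partition of $\{1,\dots,m\}$ into at most $p$ nonempty blocks there is exactly one such $\gamma$ satisfying these inequalities whose nonempty level sets $\{i:\pi(i)=k\}$ are exactly the blocks of the partition, and for this $\gamma$ the indices $k$ of the nonempty level sets are exactly $1,\dots,r$, where $r$ is the number of blocks. *)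

theory Defs
  imports Main "HOL-Library.Disjoint_Sets"
begin

definition is_assign :: "nat \<Rightarrow> nat \<Rightarrow> (nat \<Rightarrow> nat \<Rightarrow> nat) \<Rightarrow> bool" where
  "is_assign m p \<gamma> \<longleftrightarrow>
     (\<forall>i\<in>{1..m}. \<forall>k\<in>{1..p}. \<gamma> i k \<in> {0, 1}) \<and>
     (\<forall>i\<in>{1..m}. (\<Sum>k=1..p. \<gamma> i k) = 1)"

definition assign_pi :: "nat \<Rightarrow> (nat \<Rightarrow> nat \<Rightarrow> nat) \<Rightarrow> nat \<Rightarrow> nat" where
  "assign_pi p \<gamma> i = (THE k. k \<in> {1..p} \<and> \<gamma> i k = 1)"

definition ineq_cond :: "nat \<Rightarrow> nat \<Rightarrow> (nat \<Rightarrow> nat \<Rightarrow> nat) \<Rightarrow> bool" where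
  "ineq_cond m p \<gamma> \<longleftrightarrow>
     (\<forall>i\<in>{1..m}. \<forall>k\<in>{1..p}. k \<le> i \<longrightarrow>
        (\<Sum>j=1..<i. \<gamma> j k) \<ge> (\<Sum>l=k+1..p. \<gamma> i l))"

definition rgs_cond :: "nat \<Rightarrow> nat \<Rightarrow> (nat \<Rightarrow> nat \<Rightarrow> nat) \<Rightarrow> bool" where
  "rgs_cond m p \<gamma> \<longleftrightarrow>
     assign_pi p \<gamma> 1 = 1 \<and>
     (\<forall>i\<in>{2..m}. assign_pi p \<gamma> i \<le> 1 + Max (assign_pi p \<gamma> ` {1..<i}))"

definition level_set :: "nat \<Rightarrow> nat \<Rightarrow> (nat \<Rightarrow> nat \<Rightarrow> nat) \<Rightarrow> nat \<Rightarrow> nat set" where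
  "level_set m p \<gamma> k = {i\<in>{1..m}. assign_pi p \<gamma> i = k}"

definition level_blocks :: "nat \<Rightarrow> nat \<Rightarrow> (nat \<Rightarrow> nat \<Rightarrow> nat) \<Rightarrow> nat set set" where
  "level_blocks m p \<gamma> = {level_set m p \<gamma> k | k. k \<in> {1..p} \<and> level_set m p \<gamma> k \<noteq> {}}"

end

theory Submission
  imports Defs
begin

(*
  An assignment gamma is the 0/1 "one-hot" matrix of a labelling pi of
  {1..m} by columns {1..p}.  Under this correspondence
   - the right-hand side of the (i,k)-inequality is 1 exactly when k < pi(i), and the
     left-hand side is positive exactly when k occurs among pi(1),...,pi(i-1);
     so the inequality system says: every label k < pi(i) (with k <= i) is used earlier;
   - this, and equally the restricted growth condition, is equivalent to the statement
     that every prefix pi({1..i-1}) is an initial segment {1..c} of the labels.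
  Labellings with initial-segment prefixes are determined by their kernel (which
  indices share a label), hence by the level sets; this gives uniqueness.  For
  existence, label each block of a partition by the rank of its least element.
*)

section \<open>Labellings whose prefixes are initial segments\<close>

definition initial_prefixes :: "nat \<Rightarrow> (nat \<Rightarrow> nat) \<Rightarrow> bool" where
  "initial_prefixes m f \<longleftrightarrow> (\<forall>i\<in>{1..Suc m}. \<exists>c. f ` {1..<i} = {1..c})"

text \<open>Every label below f(i) (and not exceeding i) already occurs before position i;
  this is what the inequality system expresses.\<close>
definition covers_smaller :: "nat \<Rightarrow> (nat \<Rightarrow> nat) \<Rightarrow> bool" where
  "covers_smaller m f \<longleftrightarrow>
     (\<forall>i\<in>{1..m}. \<forall>k. 1 \<le> k \<longrightarrow> k < f i \<longrightarrow> k \<le> i \<longrightarrow> (\<exists>j\<in>{1..<i}. f j = k))"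

definition restricted_growth :: "nat \<Rightarrow> (nat \<Rightarrow> nat) \<Rightarrow> bool" where
  "restricted_growth m f \<longleftrightarrow> f 1 = 1 \<and> (\<forall>i\<in>{2..m}. f i \<le> 1 + Max (f ` {1..<i}))"

lemma prefix_image_Suc: "1 \<le> i \<Longrightarrow> f ` {1..<Suc i} = insert (f i) (f ` {1..<i})"
  by (simp add: atLeastLessThanSuc)

lemma prefix_image_card:
  fixes f :: "nat \<Rightarrow> nat"
  assumes "f ` {1..<i} = {1..c}" and "1 \<le> i"
  shows "c < i"
proof -
  have "c = card (f ` {1..<i})" using assms(1) by simp
  also have "\<dots> \<le> card {1..<i}" by (rule card_image_le) simp
  finally show ?thesis using assms(2) by simp
qed

lemma prefix_image_Max:
  fixes f :: "nat \<Rightarrow> nat" and i :: nat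
  assumes "f ` {1..<i} = {1..c}" and "2 \<le> i"
  shows "Max (f ` {1..<i}) = c"
proof -
  have "1 \<in> {1..<i}" using assms(2) by simp
  then have "f 1 \<in> {1..c}" using assms(1) by blast
  then show ?thesis using assms(1) by (intro Max_eqI) auto
qed

lemma prefix_step:
  assumes "f ` {1..<i} = {1..c}" and "f ` {1..<Suc i} = {1..c'}" and "1 \<le> i"
  shows "f i \<in> {1..c} \<or> f i = Suc c"
proof (cases "f i \<in> {1..c}")
  case True
  then show ?thesis ..
next
  case fresh: False
  have grow: "{1..c'} = insert (f i) {1..c}"
    using assms prefix_image_Suc[OF assms(3), of f] by simp
  have "c' = card (insert (f i) {1..c})" using grow by (metis card_atLeastAtMost diff_Suc_1)
  also have "\<dots> = Suc c" using fresh by simp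
  finally have "c' = Suc c" .
  then have "f i \<in> {1..Suc c}" using grow by blast
  then show ?thesis using fresh by auto
qed

lemma prefix_grow:
  assumes "f ` {1..<i} = {1..c}" and "1 \<le> i" and "f i \<in> {1..c} \<or> f i = Suc c"
  shows "\<exists>c'. f ` {1..<Suc i} = {1..c'}"
proof -
  have next_prefix: "f ` {1..<Suc i} = insert (f i) {1..c}"
    using prefix_image_Suc[OF assms(2), of f] assms(1) by simp
  from assms(3) show ?thesis
  proof
    assume "f i \<in> {1..c}"
    then show ?thesis using next_prefix by (intro exI[of _ c]) (simp add: insert_absorb)
  next
    assume "f i = Suc c"
    then show ?thesis using next_prefix by (intro exI[of _ "Suc c"]) (simp add: atLeastAtMostSuc_conv)
  qed
qed

lemma initial_prefixesI:
  assumes step: "\<And>i c. i \<in> {1..m} \<Longrightarrow> f ` {1..<i} = {1..c} \<Longrightarrow> f i \<in> {1..c} \<or> f i = Suc c"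
  shows "initial_prefixes m f"
proof -
  have prefix: "\<exists>c. f ` {1..<Suc i} = {1..c}" if "i \<le> m" for i
    using that
  proof (induction i)
    case 0
    show ?case by (intro exI[of _ 0]) simp
  next
    case (Suc i)
    then obtain c where c: "f ` {1..<Suc i} = {1..c}" by auto
    show ?case using prefix_grow[OF c _ step[OF _ c]] Suc.prems by simp
  qed
  show ?thesis unfolding initial_prefixes_def
  proof
    fix i assume "i \<in> {1..Suc m}"
    then obtain i' where "i = Suc i'" and "i' \<le> m" by (cases i) auto
    then show "\<exists>c. f ` {1..<i} = {1..c}" using prefix by simp
  qed
qed

lemma initial_prefixesD:
  assumes "initial_prefixes m f" and i: "i \<in> {1..m}"
  obtains c where "f ` {1..<i} = {1..c}" and "f i \<in> {1..c} \<or> f i = Suc c"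
proof -
  obtain c where c: "f ` {1..<i} = {1..c}"
    using assms unfolding initial_prefixes_def by force
  obtain c' where c': "f ` {1..<Suc i} = {1..c'}"
    using assms unfolding initial_prefixes_def by force
  show ?thesis using prefix_step[OF c c'] i by (intro that[OF c]) auto
qed

lemma covers_smaller_iff_initial_prefixes:
  assumes pos: "\<forall>i\<in>{1..m}. 1 \<le> f i"
  shows "covers_smaller m f \<longleftrightarrow> initial_prefixes m f"
proof
  assume covers: "covers_smaller m f"
  show "initial_prefixes m f"
  proof (rule initial_prefixesI)
    fix i c assume i: "i \<in> {1..m}" and c: "f ` {1..<i} = {1..c}"
    have "c < i" using prefix_image_card[OF c] i by simp
    have "\<not> Suc c < f i"
    proof
      assume "Suc c < f i"
      then have "Suc c \<in> f ` {1..<i}"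
        using covers i \<open>c < i\<close> unfolding covers_smaller_def by force
      then show False using c by simp
    qed
    then show "f i \<in> {1..c} \<or> f i = Suc c" using pos i by force
  qed
next
  assume initial: "initial_prefixes m f"
  show "covers_smaller m f" unfolding covers_smaller_def
  proof (intro ballI allI impI)
    fix i k assume i: "i \<in> {1..m}" and k: "1 \<le> k" "k < f i"
    obtain c where c: "f ` {1..<i} = {1..c}" and "f i \<in> {1..c} \<or> f i = Suc c"
      by (rule initial_prefixesD[OF initial i])
    then have "k \<in> f ` {1..<i}" using k by auto
    then show "\<exists>j\<in>{1..<i}. f j = k" by auto
  qed
qed

lemma restricted_growth_iff_initial_prefixes:
  assumes "1 \<le> m" and pos: "\<forall>i\<in>{1..m}. 1 \<le> f i"
  shows "restricted_growth m f \<longleftrightarrow> initial_prefixes m f"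
proof
  assume growth: "restricted_growth m f"
  show "initial_prefixes m f"
  proof (rule initial_prefixesI)
    fix i c assume i: "i \<in> {1..m}" and c: "f ` {1..<i} = {1..c}"
    have "f i \<le> Suc c"
    proof (cases "i = 1")
      case True
      then show ?thesis using growth unfolding restricted_growth_def by simp
    next
      case False
      then have "Max (f ` {1..<i}) = c" using prefix_image_Max[OF c] i by simp
      then show ?thesis using growth i False unfolding restricted_growth_def by auto
    qed
    then show "f i \<in> {1..c} \<or> f i = Suc c" using pos i by force
  qed
next
  assume initial: "initial_prefixes m f"
  show "restricted_growth m f" unfolding restricted_growth_def
  proof (intro conjI ballI)
    obtain c where "f ` {1..<1} = {1..c}" and "f 1 \<in> {1..c} \<or> f 1 = Suc c"
      using initial_prefixesD[OF initial, of 1] assms(1) by auto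
    then show "f 1 = 1" by simp
  next
    fix i assume i: "i \<in> {2..m}"
    obtain c where c: "f ` {1..<i} = {1..c}" and "f i \<in> {1..c} \<or> f i = Suc c"
      using initial_prefixesD[OF initial, of i] i by auto
    then show "f i \<le> 1 + Max (f ` {1..<i})" using prefix_image_Max[OF c] i by auto
  qed
qed

text \<open>A labelling with initial-segment prefixes is determined by its kernel: at each
  position the label is either the earlier label of an equivalent position or the
  next fresh one.\<close>
lemma initial_prefixes_unique:
  assumes f: "initial_prefixes m f" and g: "initial_prefixes m g"
    and kernel: "\<And>a b. a \<in> {1..m} \<Longrightarrow> b \<in> {1..m} \<Longrightarrow> f a = f b \<longleftrightarrow> g a = g b"
  shows "\<forall>i\<in>{1..m}. f i = g i"
proof -
  have "\<forall>j\<in>{1..<i}. f j = g j" if "i \<le> Suc m" for i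
    using that
  proof (induction i)
    case 0
    then show ?case by simp
  next
    case (Suc i)
    show ?case
    proof (cases "i = 0")
      case True
      then show ?thesis by simp
    next
      case False
      then have i: "i \<in> {1..m}" using Suc.prems by simp
      have agree: "\<forall>j\<in>{1..<i}. f j = g j" using Suc by simp
      obtain c where cf: "f ` {1..<i} = {1..c}" and fi: "f i \<in> {1..c} \<or> f i = Suc c"
        by (rule initial_prefixesD[OF f i])
      obtain d where dg: "g ` {1..<i} = {1..d}" and gi: "g i \<in> {1..d} \<or> g i = Suc d"
        by (rule initial_prefixesD[OF g i])
      have same_prefix: "g ` {1..<i} = f ` {1..<i}" using agree by (intro image_cong) auto
      then have cd: "{1..d} = {1..c}" unfolding cf dg .
      have old_f: "f i \<in> {1..c} \<longleftrightarrow> (\<exists>j\<in>{1..<i}. f j = f i)"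
        using cf by (metis image_iff)
      have old_g: "g i \<in> {1..c} \<longleftrightarrow> (\<exists>j\<in>{1..<i}. g j = g i)"
        using dg cd by (metis image_iff)
      have earlier: "j \<in> {1..m}" if "j \<in> {1..<i}" for j using that i by simp
      have old_iff: "f i \<in> {1..c} \<longleftrightarrow> g i \<in> {1..c}"
        unfolding old_f old_g using kernel[OF earlier i] by blast
      have "f i = g i"
      proof (cases "f i \<in> {1..c}")
        case True
        then obtain j where j: "j \<in> {1..<i}" "f j = f i" using old_f by blast
        then have "g j = g i" using kernel[OF earlier[OF j(1)] i] by simp
        then show ?thesis using j agree by auto
      next
        case False
        then show ?thesis using old_iff fi gi cd by auto
      qed
      then show ?thesis using agree by (auto simp: less_Suc_eq)
    qed
  qed
  from this[of "Suc m"] show ?thesis by auto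
qed

section \<open>Assignments and their labellings\<close>

lemma assign_row:
  assumes "is_assign m p \<gamma>" and "i \<in> {1..m}"
  shows "assign_pi p \<gamma> i \<in> {1..p}"
    and "\<And>k. k \<in> {1..p} \<Longrightarrow> \<gamma> i k = (if k = assign_pi p \<gamma> i then 1 else 0)"
proof -
  have "(\<Sum>k=1..p. \<gamma> i k) = 1" using assms by (simp add: is_assign_def)
  then have "\<exists>k\<in>{1..p}. \<gamma> i k = 1 \<and> (\<forall>l\<in>{1..p}. k \<noteq> l \<longrightarrow> \<gamma> i l = 0)"
    using sum_eq_1_iff[of "{1..p}" "\<gamma> i"] by simp
  then obtain k where k: "k \<in> {1..p}" "\<gamma> i k = 1"
    and others: "\<And>l. l \<in> {1..p} \<Longrightarrow> k \<noteq> l \<Longrightarrow> \<gamma> i l = 0"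
    by blast
  have "assign_pi p \<gamma> i = k"
    unfolding assign_pi_def using k others by (intro the_equality) force+
  then show "assign_pi p \<gamma> i \<in> {1..p}"
    and "\<And>l. l \<in> {1..p} \<Longrightarrow> \<gamma> i l = (if l = assign_pi p \<gamma> i then 1 else 0)"
    using k others by auto
qed

lemma assign_eqI:
  assumes "is_assign m p \<gamma>" and "is_assign m p \<gamma>'" and "i \<in> {1..m}" and "k \<in> {1..p}"
    and "assign_pi p \<gamma>' i = assign_pi p \<gamma> i"
  shows "\<gamma>' i k = \<gamma> i k"
  using assign_row(2)[OF assms(1,3,4)] assign_row(2)[OF assms(2,3,4)] assms(5) by simp

definition label_matrix :: "(nat \<Rightarrow> nat) \<Rightarrow> nat \<Rightarrow> nat \<Rightarrow> nat" where
  "label_matrix f i k = (if k = f i then 1 else 0)"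

lemma label_matrix_assign:
  assumes "\<forall>i\<in>{1..m}. f i \<in> {1..p}"
  shows "is_assign m p (label_matrix f)"
    and "\<And>i. i \<in> {1..m} \<Longrightarrow> assign_pi p (label_matrix f) i = f i"
proof -
  show "is_assign m p (label_matrix f)"
    unfolding is_assign_def label_matrix_def
  proof (intro conjI ballI)
    fix i k
    show "(if k = f i then 1 else 0) \<in> {0, 1::nat}" by simp
  next
    fix i assume "i \<in> {1..m}"
    then have "f i \<in> {1..p}" using assms by blast
    then show "(\<Sum>k=1..p. if k = f i then 1 else 0) = (1::nat)" by simp
  qed
  show "assign_pi p (label_matrix f) i = f i" if "i \<in> {1..m}" for i
    unfolding assign_pi_def
  proof (rule the_equality)
    show "f i \<in> {1..p} \<and> label_matrix f i (f i) = 1" using assms that by (simp add: label_matrix_def)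
    show "k = f i" if "k \<in> {1..p} \<and> label_matrix f i k = 1" for k
      using that by (simp add: label_matrix_def split: if_splits)
  qed
qed

lemma ineq_rhs:
  assumes "is_assign m p \<gamma>" and "i \<in> {1..m}"
  shows "(\<Sum>l=k+1..p. \<gamma> i l) = (if k < assign_pi p \<gamma> i then 1 else 0)"
proof -
  have "(\<Sum>l=k+1..p. \<gamma> i l) = (\<Sum>l=k+1..p. if l = assign_pi p \<gamma> i then 1 else 0)"
    using assign_row(2)[OF assms] by (intro sum.cong) auto
  also have "\<dots> = (if k < assign_pi p \<gamma> i then 1 else 0)"
    using assign_row(1)[OF assms] by simp
  finally show ?thesis .
qed

lemma ineq_lhs_pos:
  assumes "is_assign m p \<gamma>" and "i \<in> {1..m}" and "k \<in> {1..p}"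
  shows "0 < (\<Sum>j=1..<i. \<gamma> j k) \<longleftrightarrow> (\<exists>j\<in>{1..<i}. assign_pi p \<gamma> j = k)"
proof -
  have indicator: "(\<Sum>j=1..<i. \<gamma> j k) = (\<Sum>j=1..<i. if assign_pi p \<gamma> j = k then 1 else 0)"
    using assign_row(2)[OF assms(1) _ assms(3)] assms(2) by (intro sum.cong) auto
  have "(\<Sum>j=1..<i. if assign_pi p \<gamma> j = k then 1 else 0) = (0::nat)
          \<longleftrightarrow> \<not> (\<exists>j\<in>{1..<i}. assign_pi p \<gamma> j = k)"
    by simp
  then show ?thesis unfolding indicator by linarith
qed

lemma ineq_cond_iff_covers_smaller:
  assumes assign: "is_assign m p \<gamma>"
  shows "ineq_cond m p \<gamma> \<longleftrightarrow> covers_smaller m (assign_pi p \<gamma>)"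
proof -
  have "(\<Sum>l=k+1..p. \<gamma> i l) \<le> (\<Sum>j=1..<i. \<gamma> j k) \<longleftrightarrow>
        (k < assign_pi p \<gamma> i \<longrightarrow> (\<exists>j\<in>{1..<i}. assign_pi p \<gamma> j = k))"
    if "i \<in> {1..m}" and "k \<in> {1..p}" for i k
    using ineq_rhs[OF assign that(1), of k] ineq_lhs_pos[OF assign that] by auto
  moreover have "k \<in> {1..p}" if "i \<in> {1..m}" and "1 \<le> k" and "k < assign_pi p \<gamma> i" for i k
    using assign_row(1)[OF assign that(1)] that by auto
  ultimately show ?thesis
    unfolding ineq_cond_def covers_smaller_def by (meson atLeastAtMost_iff)
qed

theorem ineq_cond_iff_rgs_cond:
  assumes "1 \<le> m" and assign: "is_assign m p \<gamma>"
  shows "ineq_cond m p \<gamma> \<longleftrightarrow> rgs_cond m p \<gamma>"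
proof -
  have pos: "\<forall>i\<in>{1..m}. 1 \<le> assign_pi p \<gamma> i" using assign_row(1)[OF assign] by auto
  have "ineq_cond m p \<gamma> \<longleftrightarrow> covers_smaller m (assign_pi p \<gamma>)"
    by (rule ineq_cond_iff_covers_smaller[OF assign])
  also have "\<dots> \<longleftrightarrow> initial_prefixes m (assign_pi p \<gamma>)"
    by (rule covers_smaller_iff_initial_prefixes[OF pos])
  also have "\<dots> \<longleftrightarrow> restricted_growth m (assign_pi p \<gamma>)"
    by (rule restricted_growth_iff_initial_prefixes[OF assms(1) pos, symmetric])
  also have "\<dots> \<longleftrightarrow> rgs_cond m p \<gamma>"
    by (simp add: restricted_growth_def rgs_cond_def)
  finally show ?thesis .
qed

lemma nonempty_levels:
  assumes "is_assign m p \<gamma>"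
  shows "{k\<in>{1..p}. level_set m p \<gamma> k \<noteq> {}} = assign_pi p \<gamma> ` {1..m}"
  using assign_row(1)[OF assms] unfolding level_set_def by auto

lemma level_blocks_image:
  assumes "is_assign m p \<gamma>"
  shows "level_blocks m p \<gamma> = (\<lambda>a. level_set m p \<gamma> (assign_pi p \<gamma> a)) ` {1..m}"
proof
  show "level_blocks m p \<gamma> \<subseteq> (\<lambda>a. level_set m p \<gamma> (assign_pi p \<gamma> a)) ` {1..m}"
    unfolding level_blocks_def level_set_def by auto
  show "(\<lambda>a. level_set m p \<gamma> (assign_pi p \<gamma> a)) ` {1..m} \<subseteq> level_blocks m p \<gamma>"
  proof
    fix L assume "L \<in> (\<lambda>a. level_set m p \<gamma> (assign_pi p \<gamma> a)) ` {1..m}"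
    then obtain a where a: "a \<in> {1..m}" and L: "L = level_set m p \<gamma> (assign_pi p \<gamma> a)" by blast
    have "a \<in> L" using a L by (simp add: level_set_def)
    then show "L \<in> level_blocks m p \<gamma>"
      unfolding level_blocks_def using assign_row(1)[OF assms a] L by blast
  qed
qed

lemma level_blocks_kernel:
  assumes "is_assign m p \<gamma>" and "is_assign m p \<gamma>'"
    and same: "level_blocks m p \<gamma> = level_blocks m p \<gamma>'"
    and a: "a \<in> {1..m}" and b: "b \<in> {1..m}"
  shows "assign_pi p \<gamma> a = assign_pi p \<gamma> b \<longleftrightarrow> assign_pi p \<gamma>' a = assign_pi p \<gamma>' b"
proof -
  have "level_set m p \<gamma> (assign_pi p \<gamma> a) \<in> level_blocks m p \<gamma>'"
    using same level_blocks_image[OF assms(1)] a by auto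
  then obtain k where "level_set m p \<gamma> (assign_pi p \<gamma> a) = level_set m p \<gamma>' k"
    unfolding level_blocks_def by blast
  moreover have "a \<in> level_set m p \<gamma> (assign_pi p \<gamma> a)" using a by (simp add: level_set_def)
  ultimately have "level_set m p \<gamma> (assign_pi p \<gamma> a) = level_set m p \<gamma>' (assign_pi p \<gamma>' a)"
    by (simp add: level_set_def)
  then have "b \<in> level_set m p \<gamma> (assign_pi p \<gamma> a) \<longleftrightarrow> b \<in> level_set m p \<gamma>' (assign_pi p \<gamma>' a)"
    by simp
  then show ?thesis using b by (auto simp: level_set_def)
qed

lemma assign_determined_by_levels:
  assumes "is_assign m p \<gamma>" and "ineq_cond m p \<gamma>"
    and "is_assign m p \<gamma>'" and "ineq_cond m p \<gamma>'"
    and "level_blocks m p \<gamma>' = level_blocks m p \<gamma>"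
    and "i \<in> {1..m}" and "k \<in> {1..p}"
  shows "\<gamma>' i k = \<gamma> i k"
proof -
  have initial: "initial_prefixes m (assign_pi p g)"
    if "is_assign m p g" and "ineq_cond m p g" for g
  proof -
    have pos: "\<forall>i\<in>{1..m}. 1 \<le> assign_pi p g i" using assign_row(1)[OF that(1)] by auto
    show ?thesis using that(2) ineq_cond_iff_covers_smaller[OF that(1)]
        covers_smaller_iff_initial_prefixes[OF pos] by simp
  qed
  have "\<forall>i\<in>{1..m}. assign_pi p \<gamma>' i = assign_pi p \<gamma> i"
  proof (rule initial_prefixes_unique)
    show "initial_prefixes m (assign_pi p \<gamma>')" by (rule initial[OF assms(3,4)])
    show "initial_prefixes m (assign_pi p \<gamma>)" by (rule initial[OF assms(1,2)])
    show "assign_pi p \<gamma>' a = assign_pi p \<gamma>' b \<longleftrightarrow> assign_pi p \<gamma> a = assign_pi p \<gamma> b"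
      if "a \<in> {1..m}" and "b \<in> {1..m}" for a b
      by (rule level_blocks_kernel[OF assms(3,1,5) that])
  qed
  then show ?thesis using assign_eqI[OF assms(1,3,6,7)] assms(6) by blast
qed

section \<open>The canonical labelling of a partition of a finite linear order\<close>

definition block_of :: "'a set set \<Rightarrow> 'a \<Rightarrow> 'a set" where
  "block_of P x = (THE B. B \<in> P \<and> x \<in> B)"

definition block_rank :: "'a::linorder set set \<Rightarrow> 'a set \<Rightarrow> nat" where
  "block_rank P B = card {C\<in>P. Min C \<le> Min B}"

definition canonical_label :: "'a::linorder set set \<Rightarrow> 'a \<Rightarrow> nat" where
  "canonical_label P x = block_rank P (block_of P x)"

locale ordered_partition =
  fixes A :: "'a::linorder set" and P :: "'a set set"
  assumes partition: "partition_on A P" and finite: "finite A"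
begin

lemma block_subset: "B \<in> P \<Longrightarrow> B \<subseteq> A"
  using partition by (auto simp: partition_on_def)

lemma finite_block: "B \<in> P \<Longrightarrow> finite B"
  using block_subset finite finite_subset by blast

lemma finite_blocks: "finite P"
  using block_subset finite by (meson Pow_iff finite_Pow_iff finite_subset subsetI)

lemma Min_in_block:
  assumes "B \<in> P"
  shows "Min B \<in> B"
proof -
  have "B \<noteq> {}" using partition assms by (auto simp: partition_on_def)
  then show ?thesis using finite_block[OF assms] by simp
qed

lemma blocks_eqI: "B \<in> P \<Longrightarrow> C \<in> P \<Longrightarrow> x \<in> B \<Longrightarrow> x \<in> C \<Longrightarrow> B = C"
  using partition_onD2[OF partition] disjointD by blast

lemma block_of_eq: "B \<in> P \<Longrightarrow> x \<in> B \<Longrightarrow> block_of P x = B"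
  unfolding block_of_def by (rule the_equality) (auto dest: blocks_eqI)

lemma block_of_in:
  assumes "x \<in> A"
  shows "block_of P x \<in> P" and "x \<in> block_of P x"
proof -
  obtain B where "B \<in> P" and "x \<in> B" using partition assms by (auto simp: partition_on_def)
  then show "block_of P x \<in> P" and "x \<in> block_of P x" using block_of_eq by auto
qed

lemma block_of_class:
  assumes "x \<in> A"
  shows "block_of P x = {y\<in>A. block_of P y = block_of P x}"
  using block_of_in[OF assms] block_subset block_of_eq block_of_in(2) by blast

lemma blocks_image: "block_of P ` A = P"
proof
  show "block_of P ` A \<subseteq> P" using block_of_in(1) by blast
  show "P \<subseteq> block_of P ` A"
  proof
    fix B assume B: "B \<in> P"
    then have "Min B \<in> A" using Min_in_block block_subset by blast
    moreover have "block_of P (Min B) = B" using block_of_eq[OF B Min_in_block[OF B]] .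
    ultimately show "B \<in> block_of P ` A" by force
  qed
qed

lemma block_rank_mono:
  assumes "B \<in> P" and "C \<in> P" and "Min B \<le> Min C"
  shows "block_rank P B \<le> block_rank P C"
  unfolding block_rank_def using finite_blocks assms by (intro card_mono) auto

lemma block_rank_strict_mono:
  assumes "B \<in> P" and "C \<in> P" and "Min B < Min C"
  shows "block_rank P B < block_rank P C"
  unfolding block_rank_def
proof (rule psubset_card_mono)
  show "finite {D\<in>P. Min D \<le> Min C}" using finite_blocks by simp
  show "{D\<in>P. Min D \<le> Min B} \<subset> {D\<in>P. Min D \<le> Min C}" using assms by force
qed

lemma block_rank_bij: "bij_betw (block_rank P) P {1..card P}"
proof -
  have inj: "inj_on (block_rank P) P"
  proof (rule inj_onI)
    fix B C assume B: "B \<in> P" and C: "C \<in> P" and rank: "block_rank P B = block_rank P C"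
    then have "Min B = Min C"
      using block_rank_strict_mono by (metis less_irrefl linorder_neqE)
    then show "B = C" using blocks_eqI[OF B C] Min_in_block[OF B] Min_in_block[OF C] by simp
  qed
  have range: "block_rank P B \<in> {1..card P}" if B: "B \<in> P" for B
  proof -
    have "B \<in> {C\<in>P. Min C \<le> Min B}" using B by simp
    then have "0 < block_rank P B" using finite_blocks by (auto simp: block_rank_def card_gt_0_iff)
    moreover have "block_rank P B \<le> card P"
      unfolding block_rank_def using finite_blocks by (intro card_mono) auto
    ultimately show ?thesis by simp
  qed
  have "block_rank P ` P = {1..card P}"
    using range card_image[OF inj] by (intro card_subset_eq) auto
  then show ?thesis using inj by (simp add: bij_betw_def)
qed

lemma canonical_label_image: "canonical_label P ` A = {1..card P}"
proof -
  have "canonical_label P ` A = block_rank P ` (block_of P ` A)"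
    by (simp add: canonical_label_def image_image)
  also have "\<dots> = {1..card P}" using block_rank_bij blocks_image by (simp add: bij_betw_def)
  finally show ?thesis .
qed

lemma canonical_label_eq_iff:
  assumes "x \<in> A" and "y \<in> A"
  shows "canonical_label P x = canonical_label P y \<longleftrightarrow> block_of P x = block_of P y"
  using bij_betw_imp_inj_on[OF block_rank_bij] block_of_in(1)[OF assms(1)] block_of_in(1)[OF assms(2)]
  by (auto simp: canonical_label_def dest: inj_onD)

text \<open>Every smaller label is attained at an earlier element, namely the least element
  of the block of that rank.\<close>
lemma canonical_label_earlier:
  assumes x: "x \<in> A" and k: "1 \<le> k" "k < canonical_label P x"
  shows "\<exists>y\<in>A. y < x \<and> canonical_label P y = k"
proof -
  let ?B = "block_of P x"
  have "canonical_label P x \<in> {1..card P}" using canonical_label_image x by blast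
  then have "k \<in> {1..card P}" using k by simp
  then obtain C where C: "C \<in> P" and rank: "block_rank P C = k"
    using block_rank_bij by (metis bij_betw_def imageE)
  have "\<not> Min ?B \<le> Min C"
  proof
    assume "Min ?B \<le> Min C"
    then have "canonical_label P x \<le> k"
      using block_rank_mono[OF block_of_in(1)[OF x] C] rank by (simp add: canonical_label_def)
    then show False using k by simp
  qed
  moreover have "Min ?B \<le> x"
    using finite_block[OF block_of_in(1)[OF x]] block_of_in(2)[OF x] by simp
  ultimately have "Min C < x" by simp
  moreover have "Min C \<in> A" using Min_in_block[OF C] block_subset[OF C] by blast
  moreover have "canonical_label P (Min C) = k"
    using block_of_eq[OF C Min_in_block[OF C]] rank by (simp add: canonical_label_def)
  ultimately show ?thesis by blast
qed

end

section \<open>The canonical assignment of a partition\<close>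

lemma canonical_assignment:
  fixes m p :: nat and P :: "nat set set"
  assumes part: "partition_on {1..m} P" and card: "card P \<le> p"
  defines "\<gamma> \<equiv> label_matrix (canonical_label P)"
  shows "is_assign m p \<gamma>" and "ineq_cond m p \<gamma>" and "level_blocks m p \<gamma> = P"
    and "{k\<in>{1..p}. level_set m p \<gamma> k \<noteq> {}} = {1..card P}"
proof -
  interpret ordered_partition "{1..m}" P by unfold_locales (use part in simp_all)
  have "canonical_label P i \<in> {1..card P}" if "i \<in> {1..m}" for i
    using canonical_label_image that by blast
  then have labels: "\<forall>i\<in>{1..m}. canonical_label P i \<in> {1..p}" using card by fastforce
  show assign: "is_assign m p \<gamma>" unfolding \<gamma>_def by (rule label_matrix_assign(1)[OF labels])
  have pi: "assign_pi p \<gamma> i = canonical_label P i" if "i \<in> {1..m}" for i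
    unfolding \<gamma>_def by (rule label_matrix_assign(2)[OF labels that])
  have "covers_smaller m (assign_pi p \<gamma>)"
    unfolding covers_smaller_def
  proof (intro ballI allI impI)
    fix i k assume i: "i \<in> {1..m}" and k: "1 \<le> k" "k < assign_pi p \<gamma> i" "k \<le> i"
    obtain j where j: "j \<in> {1..m}" "j < i" "canonical_label P j = k"
      using canonical_label_earlier[OF i k(1)] k(2) pi[OF i] by auto
    show "\<exists>j\<in>{1..<i}. assign_pi p \<gamma> j = k"
    proof
      show "j \<in> {1..<i}" using j by simp
      show "assign_pi p \<gamma> j = k" using j pi by simp
    qed
  qed
  then show "ineq_cond m p \<gamma>" using ineq_cond_iff_covers_smaller[OF assign] by simp
  have level: "level_set m p \<gamma> (assign_pi p \<gamma> a) = block_of P a" if a: "a \<in> {1..m}" for a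
  proof -
    have "level_set m p \<gamma> (assign_pi p \<gamma> a) = {i\<in>{1..m}. block_of P i = block_of P a}"
      unfolding level_set_def using pi a canonical_label_eq_iff[OF _ a] by (intro Collect_cong) auto
    also have "\<dots> = block_of P a" by (rule block_of_class[OF a, symmetric])
    finally show ?thesis .
  qed
  have "level_blocks m p \<gamma> = (\<lambda>a. level_set m p \<gamma> (assign_pi p \<gamma> a)) ` {1..m}"
    by (rule level_blocks_image[OF assign])
  also have "\<dots> = block_of P ` {1..m}" using level by (rule image_cong[OF refl])
  finally show "level_blocks m p \<gamma> = P" using blocks_image by simp
  have "{k\<in>{1..p}. level_set m p \<gamma> k \<noteq> {}} = assign_pi p \<gamma> ` {1..m}"
    by (rule nonempty_levels[OF assign])
  also have "\<dots> = canonical_label P ` {1..m}" using pi by (rule image_cong[OF refl])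
  finally show "{k\<in>{1..p}. level_set m p \<gamma> k \<noteq> {}} = {1..card P}"
    using canonical_label_image by simp
qed

theorem mainTheorem4:
  fixes m p :: nat
  assumes "m \<ge> 1" and "p \<ge> 1"
  shows "(\<forall>\<gamma>. is_assign m p \<gamma> \<longrightarrow> (ineq_cond m p \<gamma> \<longleftrightarrow> rgs_cond m p \<gamma>)) \<and>
         (\<forall>P. partition_on {1..m} P \<and> card P \<le> p \<longrightarrow>
            (\<exists>\<gamma>. is_assign m p \<gamma> \<and> ineq_cond m p \<gamma> \<and> level_blocks m p \<gamma> = P \<and>
                 {k\<in>{1..p}. level_set m p \<gamma> k \<noteq> {}} = {1..card P} \<and>
                 (\<forall>\<gamma>'. is_assign m p \<gamma>' \<and> ineq_cond m p \<gamma>' \<and> level_blocks m p \<gamma>' = P \<longrightarrow>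
                        (\<forall>i\<in>{1..m}. \<forall>k\<in>{1..p}. \<gamma>' i k = \<gamma> i k))))"
proof (intro conjI allI impI)
  fix \<gamma> assume "is_assign m p \<gamma>"
  then show "ineq_cond m p \<gamma> \<longleftrightarrow> rgs_cond m p \<gamma>" by (rule ineq_cond_iff_rgs_cond[OF assms(1)])
next
  fix P assume "partition_on {1..m} P \<and> card P \<le> p"
  then have part: "partition_on {1..m} P" and card: "card P \<le> p" by auto
  let ?\<gamma> = "label_matrix (canonical_label P)"
  note canonical = canonical_assignment[OF part card]
  show "\<exists>\<gamma>. is_assign m p \<gamma> \<and> ineq_cond m p \<gamma> \<and> level_blocks m p \<gamma> = P \<and>
          {k\<in>{1..p}. level_set m p \<gamma> k \<noteq> {}} = {1..card P} \<and>
          (\<forall>\<gamma>'. is_assign m p \<gamma>' \<and> ineq_cond m p \<gamma>' \<and> level_blocks m p \<gamma>' = P \<longrightarrow>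
                 (\<forall>i\<in>{1..m}. \<forall>k\<in>{1..p}. \<gamma>' i k = \<gamma> i k))"
  proof (intro exI[of _ ?\<gamma>] conjI allI impI ballI canonical)
    fix \<gamma>' i k
    assume "is_assign m p \<gamma>' \<and> ineq_cond m p \<gamma>' \<and> level_blocks m p \<gamma>' = P"
      and "i \<in> {1..m}" and "k \<in> {1..p}"
    then show "\<gamma>' i k = ?\<gamma> i k"
      using assign_determined_by_levels[OF canonical(1,2)] canonical(3) by blast
  qed
qed

end
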